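(* There exists an algorithm that, given any set $A$ of $N$ elements and an integer $h \in \{0,\dots,N\}$, returns a set chosen uniformly at random among all subsets of $A$ with exactly $h$ elements. The algorithm requires $O(N)$ time and at most $60N$ random bits with probability at least $1 - O\left(e^{-\sqrt{N}}\right)$.
   Context: The algorithm has access to a source of independent unbiased random bits. *)

theory Defs
  imports "HOL-Probability.Probability"
begin

text \<open>A unit-cost word-RAM with a random-bit instruction.
  Memory is a map from addresses to natural numbers; direct operands are
  addresses, indirect access goes through the contents of a cell.\<close>

datatype instr =
    Const nat nat
  | Add nat nat nat
  | Sub nat nat nat          (* M[r] := M[a] - M[b]  (truncated) *)
  | Mul nat nat nat
  | Div nat nat nat
  | Mod nat nat nat
  | Load nat nat
  | Store nat nat
  | Jz nat nat
  | Rand nat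
  | Halt

type_synonym prog = "instr list"

text \<open>Configuration: program counter, memory, number of random bits consumed.\<close>
type_synonym config = "nat \<times> (nat \<Rightarrow> nat) \<times> nat"

definition halted :: "prog \<Rightarrow> config \<Rightarrow> bool" where
  "halted p c = (fst c \<ge> length p \<or> p ! fst c = Halt)"

fun exec :: "instr \<Rightarrow> (nat \<Rightarrow> bool) \<Rightarrow> config \<Rightarrow> config" where
  "exec (Const r v) \<omega> (pc, m, k) = (Suc pc, m(r := v), k)"
| "exec (Add r a b) \<omega> (pc, m, k) = (Suc pc, m(r := m a + m b), k)"
| "exec (Sub r a b) \<omega> (pc, m, k) = (Suc pc, m(r := m a - m b), k)"
| "exec (Mul r a b) \<omega> (pc, m, k) = (Suc pc, m(r := m a * m b), k)"
| "exec (Div r a b) \<omega> (pc, m, k) = (Suc pc, m(r := m a div m b), k)"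
| "exec (Mod r a b) \<omega> (pc, m, k) = (Suc pc, m(r := m a mod m b), k)"
| "exec (Load r a) \<omega> (pc, m, k) = (Suc pc, m(r := m (m a)), k)"
| "exec (Store a b) \<omega> (pc, m, k) = (Suc pc, m(m a := m b), k)"
| "exec (Jz r l) \<omega> (pc, m, k) = ((if m r = 0 then l else Suc pc), m, k)"
| "exec (Rand r) \<omega> (pc, m, k) = (Suc pc, m(r := (if \<omega> k then 1 else 0)), Suc k)"
| "exec Halt \<omega> c = c"

definition step :: "prog \<Rightarrow> (nat \<Rightarrow> bool) \<Rightarrow> config \<Rightarrow> config" where
  "step p \<omega> c = (if halted p c then c else exec (p ! fst c) \<omega> c)"

text \<open>Input convention: M[0] = N, M[1] = h, all other cells 0; the ground set
  A is represented by the indices 0,...,N-1.\<close>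
definition init_config :: "nat \<Rightarrow> nat \<Rightarrow> config" where
  "init_config N h = (0, (\<lambda>_. 0)(0 := N, 1 := h), 0)"

definition run :: "prog \<Rightarrow> (nat \<Rightarrow> bool) \<Rightarrow> nat \<Rightarrow> nat \<Rightarrow> nat \<Rightarrow> config" where
  "run p \<omega> N h t = (step p \<omega> ^^ t) (init_config N h)"

text \<open>Output convention on halting: M[0] = number c of ram_output entries,
  M[1],...,M[c] the entries; the ram_output is the set of these entries.\<close>
definition ram_output :: "config \<Rightarrow> nat set" where
  "ram_output c = (let m = fst (snd c) in (\<lambda>i. m (Suc i)) ` {..<m 0})"

definition bits_used :: "config \<Rightarrow> nat" where
  "bits_used c = snd (snd c)"

text \<open>Word-RAM restriction: every memory word stays bounded by a fixed
  polynomial in N, i.e. words have O(log N) bits.\<close>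
definition word_bounded :: "prog \<Rightarrow> nat \<Rightarrow> bool" where
  "word_bounded p d = (\<forall>N h \<omega> t a. h \<le> N \<longrightarrow> fst (snd (run p \<omega> N h t)) a \<le> (N + 2) ^ d)"

definition coins :: "(nat \<Rightarrow> bool) measure" where
  "coins = PiM UNIV (\<lambda>_. measure_pmf (pmf_of_set (UNIV :: bool set)))"

end

theory Submission
  imports Defs
begin

text \<open>The program performs selection sampling: it scans the elements in order and, when \<open>n\<close>
  of them remain and \<open>k\<close> are still to be chosen, chooses the current one with probability
  \<open>k / n\<close>.  By induction on \<open>n\<close>, from a state in which the set \<open>T\<close> has been chosen among the
  first \<open>i\<close> elements, the output is \<open>S\<close> with probability \<open>1 / (n choose k)\<close> if
  \<open>T = S \<inter> {..<i}\<close> and 0 otherwise; the inductive step is Pascal's rule in the form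
  \<open>(k / n) / (n - 1 choose k - 1) = (1 - k / n) / (n - 1 choose k) = 1 / (n choose k)\<close>.

  The coin of bias \<open>k / n\<close> is tossed exactly by comparing fair bits with the binary expansion
  of \<open>k / n\<close>.  Every compared bit settles the comparison with probability 1/2, so the number
  \<open>G\<close> of bits spent on one element satisfies \<open>E[(3/2)^G] \<le> 3\<close>, and Markov's inequality for
  \<open>(3/2)^bits\<close> gives \<open>P(bits \<ge> K) \<le> 3^N (2/3)^K\<close>, which is below \<open>e^-N\<close> for
  \<open>K = 60 N + 1\<close>.  The running time is at most 12 steps per bit plus 30 per element.\<close>

section \<open>Runs and reachability probabilities\<close>

definition run_from :: "prog \<Rightarrow> (nat \<Rightarrow> bool) \<Rightarrow> config \<Rightarrow> nat \<Rightarrow> config" where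
  "run_from p \<omega> c t = (step p \<omega> ^^ t) c"

definition count_bit :: "config \<Rightarrow> config" where
  "count_bit c = (fst c, fst (snd c), Suc (snd (snd c)))"

definition reach_prob :: "prog \<Rightarrow> (config \<Rightarrow> bool) \<Rightarrow> config \<Rightarrow> real" where
  "reach_prob p Q c = measure coins {\<omega>. \<exists>t. Q (run_from p \<omega> c t)}"

lemma run_from_0 [simp]: "run_from p \<omega> c 0 = c"
  by (simp add: run_from_def)

lemma run_from_Suc: "run_from p \<omega> c (Suc t) = run_from p \<omega> (step p \<omega> c) t"
  by (simp only: run_from_def funpow_Suc_right comp_def)

lemma run_eq_run_from: "run p \<omega> N h t = run_from p \<omega> (init_config N h) t"
  by (simp add: run_def run_from_def)

lemma run_from_halted: "halted p c \<Longrightarrow> run_from p \<omega> c t = c"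
  by (induction t) (simp_all add: run_from_Suc step_def)

lemma ex_run_from_iff:
  "(\<exists>t. Q (run_from p \<omega> c t)) \<longleftrightarrow> Q c \<or> (\<exists>t. Q (run_from p \<omega> (step p \<omega> c) t))"
  by (metis not0_implies_Suc run_from_0 run_from_Suc)

lemma step_count_bit: "step p \<omega> (count_bit c) = count_bit (step p (\<lambda>i. \<omega> (Suc i)) c)"
proof -
  obtain pc m k where c: "c = (pc, m, k)" by (cases c)
  show ?thesis
    by (cases "p ! pc") (auto simp: c step_def count_bit_def halted_def)
qed

lemma run_from_count_bit:
  "run_from p \<omega> (count_bit c) t = count_bit (run_from p (\<lambda>i. \<omega> (Suc i)) c t)"
  by (induction t arbitrary: c) (simp_all add: run_from_Suc step_count_bit)

lemma step_eq_step_current_bit: "step p \<omega> c = step p (\<lambda>_. \<omega> (snd (snd c))) c"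
proof -
  obtain pc m k where c: "c = (pc, m, k)" by (cases c)
  show ?thesis
    by (cases "p ! pc") (auto simp: c step_def halted_def)
qed

lemma step_cases_current_bit:
  "step p \<omega> c = (if \<omega> (snd (snd c)) then step p (\<lambda>_. True) c else step p (\<lambda>_. False) c)"
  by (cases "\<omega> (snd (snd c))") (simp_all add: step_eq_step_current_bit[of p \<omega> c])

interpretation coin_seq: sequence_space "measure_pmf (pmf_of_set (UNIV :: bool set))"
  by unfold_locales

lemma coins_eq_coin_seq: "coins = coin_seq.S"
  by (simp add: coins_def)

interpretation coins: prob_space coins
  unfolding coins_eq_coin_seq by (rule coin_seq.prob_space_axioms)

lemma space_coins [simp]: "space coins = UNIV"
  by (simp add: coins_def space_PiM)

lemma sets_coins_bit: "{\<omega>. \<omega> k} \<in> sets coins"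
proof -
  have "(\<lambda>\<omega>. \<omega> k) \<in> measurable coins (measure_pmf (pmf_of_set (UNIV :: bool set)))"
    unfolding coins_def by (rule measurable_component_singleton) simp
  then have "(\<lambda>\<omega>. \<omega> k) -` {True} \<inter> space coins \<in> sets coins"
    by (rule measurable_sets) simp
  then show ?thesis
    by (simp add: vimage_def)
qed

lemma sets_coins_run_from: "{\<omega>. P (run_from p \<omega> c t)} \<in> sets coins"
proof (induction t arbitrary: c)
  case 0
  show ?case
    using sets.top[of coins] by (cases "P c") auto
next
  case (Suc t)
  let ?k = "snd (snd c)"
  have "{\<omega>. P (run_from p \<omega> c (Suc t))} =
      {\<omega>. \<omega> ?k} \<inter> {\<omega>. P (run_from p \<omega> (step p (\<lambda>_. True) c) t)} \<union>
      (space coins - {\<omega>. \<omega> ?k}) \<inter> {\<omega>. P (run_from p \<omega> (step p (\<lambda>_. False) c) t)}"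
    by (rule set_eqI, subst run_from_Suc, subst step_cases_current_bit) auto
  also have "\<dots> \<in> sets coins"
    using Suc sets_coins_bit sets.top[of coins] by (intro sets.Un sets.Int sets.Diff) auto
  finally show ?case .
qed

lemma sets_coins_ex_run_from: "{\<omega>. \<exists>t. R t (run_from p \<omega> c t)} \<in> sets coins"
proof -
  have "{\<omega>. \<exists>t. R t (run_from p \<omega> c t)} = (\<Union>t. {\<omega>. R t (run_from p \<omega> c t)})"
    by auto
  also have "\<dots> \<in> sets coins"
    using sets_coins_run_from by blast
  finally show ?thesis .
qed

lemma sets_coins_ex_run: "{\<omega> \<in> space coins. \<exists>t. R t (run p \<omega> N h t)} \<in> sets coins"
  using sets_coins_ex_run_from[of R p "init_config N h"] by (simp add: run_eq_run_from)

lemma measure_coins_first_bit: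
  assumes E: "E \<in> sets coins"
  shows "measure coins E =
    (measure coins {\<omega>. case_nat True \<omega> \<in> E} + measure coins {\<omega>. case_nat False \<omega> \<in> E}) / 2"
proof -
  let ?M = "measure_pmf (pmf_of_set (UNIV :: bool set))"
  let ?cons = "\<lambda>(s, \<omega>). case_nat s \<omega>"
  have meas: "?cons \<in> measurable (?M \<Otimes>\<^sub>M coin_seq.S) coin_seq.S"
    by measurable
  have "emeasure coins E = emeasure (distr (?M \<Otimes>\<^sub>M coin_seq.S) coin_seq.S ?cons) E"
    by (simp add: coin_seq.PiM_iter coins_eq_coin_seq)
  also have "\<dots> = emeasure (?M \<Otimes>\<^sub>M coin_seq.S) (?cons -` E \<inter> space (?M \<Otimes>\<^sub>M coin_seq.S))"
    using E meas by (simp add: emeasure_distr coins_eq_coin_seq)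
  also have "\<dots> = \<integral>\<^sup>+ s. emeasure coin_seq.S
      (Pair s -` (?cons -` E \<inter> space (?M \<Otimes>\<^sub>M coin_seq.S))) \<partial>?M"
    using E meas
    by (intro coin_seq.emeasure_pair_measure_alt) (simp add: coins_eq_coin_seq measurable_sets)
  also have "\<dots> = \<integral>\<^sup>+ s. emeasure coins {\<omega>. case_nat s \<omega> \<in> E} \<partial>?M"
    by (intro nn_integral_cong)
      (simp add: coins_eq_coin_seq[symmetric] space_pair_measure vimage_def)
  also have "\<dots> = (emeasure coins {\<omega>. case_nat True \<omega> \<in> E} +
      emeasure coins {\<omega>. case_nat False \<omega> \<in> E}) / 2"
    by (simp add: nn_integral_pmf_of_set UNIV_bool add.commute)
  finally have "ennreal (measure coins E) =
      ennreal ((measure coins {\<omega>. case_nat True \<omega> \<in> E} +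
        measure coins {\<omega>. case_nat False \<omega> \<in> E}) / 2)"
    by (simp add: coins.emeasure_eq_measure ennreal_plus[symmetric] divide_ennreal[symmetric]
        del: ennreal_plus)
  then show ?thesis
    by (simp add: ennreal_inj)
qed

lemma reach_prob_nonneg: "0 \<le> reach_prob p Q c"
  by (simp add: reach_prob_def)

lemma reach_prob_le_1: "reach_prob p Q c \<le> 1"
  unfolding reach_prob_def by (rule coins.prob_le_1)

lemma reach_prob_halted: "halted p c \<Longrightarrow> reach_prob p Q c = (if Q c then 1 else 0)"
  by (simp add: reach_prob_def run_from_halted coins.prob_space[simplified])

text \<open>The hypothesis \<open>pc \<in> D\<close> only serves to bound the unfolding by the simplifier:
  instantiating \<open>D\<close> lists the program counters to be executed symbolically.\<close>

lemma reach_prob_deterministic: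
  assumes "pc \<in> D" "\<not> Q (pc, m, 0)" "\<forall>r. p ! pc \<noteq> Rand r"
  shows "reach_prob p Q (pc, m, 0) = reach_prob p Q (step p (\<lambda>_. False) (pc, m, 0))"
proof -
  define c' where "c' = step p (\<lambda>_. False) (pc, m, 0)"
  have "step p \<omega> (pc, m, 0) = c'" for \<omega>
    unfolding c'_def using assms(3) by (cases "p ! pc") (auto simp: step_def)
  then show ?thesis
    unfolding reach_prob_def c'_def[symmetric] by (subst ex_run_from_iff) (simp add: assms(2))
qed

text \<open>Symbolically executed configurations keep the bit counter at 0: a consumed bit is
  accounted for in the target predicate \<open>Q \<circ> count_bit\<close> instead.\<close>

lemma reach_prob_Rand:
  assumes "p ! pc = Rand r" "pc < length p" "\<not> Q (pc, m, 0)"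
  shows "reach_prob p Q (pc, m, 0) =
    (reach_prob p (Q \<circ> count_bit) (Suc pc, m(r := 1), 0) +
     reach_prob p (Q \<circ> count_bit) (Suc pc, m(r := 0), 0)) / 2"
proof -
  have "case_nat b \<omega> \<in> {\<omega>. \<exists>t. Q (run_from p \<omega> (pc, m, 0) t)} \<longleftrightarrow>
      (\<exists>t. (Q \<circ> count_bit) (run_from p \<omega> (Suc pc, m(r := (if b then 1 else 0)), 0) t))" for b \<omega>
  proof -
    have "step p (case_nat b \<omega>) (pc, m, 0) = count_bit (Suc pc, m(r := (if b then 1 else 0)), 0)"
      using assms(1,2) by (simp add: step_def count_bit_def halted_def)
    moreover have "(\<lambda>i. case_nat b \<omega> (Suc i)) = \<omega>"
      by simp
    ultimately show ?thesis
      by (subst mem_Collect_eq, subst ex_run_from_iff) (simp add: assms(3) run_from_count_bit)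
  qed
  then show ?thesis
    unfolding reach_prob_def
    by (subst measure_coins_first_bit[OF sets_coins_ex_run_from]) (simp del: mem_Collect_eq)
qed

section \<open>Selection sampling\<close>

text \<open>Memory layout: M0 = n (elements left), M1 = k (elements still to be chosen),
  M2 = N - n (the current element), M3 = r, M4 = address of the next output cell, M5 scratch,
  M6 the random bit; chosen elements are stored in M7, M8, \<dots>.
  Lines 7--17 toss the coin of bias \<open>r / n\<close> (initially \<open>r = k\<close>) by comparing random bits with
  the binary digits of \<open>r / n\<close>: the next digit is 1 iff \<open>n \<le> 2 r\<close>, and the remainder becomes
  \<open>2 r mod n\<close>.  At the end, lines 27--38 set M0 = 6 + cnt and overwrite M1, \<dots>, M6 with a
  copy of M7; this yields the output set without moving the chosen elements.\<close>

definition sampler :: prog where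
  "sampler = [Const 4 7, Jz 0 27, Jz 1 22, Sub 5 0 1, Jz 5 18, Const 3 0, Add 3 3 1,
    Add 3 3 3, Rand 6, Sub 5 0 3, Jz 5 14, Jz 6 7, Const 5 0, Jz 5 22, Sub 3 3 0, Jz 6 18,
    Const 5 0, Jz 5 7,
    Store 4 2, Const 5 1, Add 4 4 5, Sub 1 1 5,
    Const 5 1, Add 2 2 5, Sub 0 0 5, Const 5 0, Jz 5 1,
    Const 5 7, Sub 6 4 5, Jz 6 40, Const 5 1, Sub 0 4 5, Const 5 7, Load 1 5, Load 2 5,
    Load 3 5, Load 4 5, Load 6 5, Load 5 5, Halt, Const 0 0, Halt]"

lemma length_sampler [simp]: "length sampler = 42"
  by (simp add: sampler_def)

text \<open>\<open>loop_inv\<close> holds at line 1, the head of the main loop, and \<open>compare_inv\<close> at line 7,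
  the head of the comparison loop.\<close>

definition loop_inv :: "nat \<Rightarrow> nat \<Rightarrow> nat \<Rightarrow> nat \<Rightarrow> nat \<Rightarrow> nat set \<Rightarrow> (nat \<Rightarrow> nat) \<Rightarrow> bool" where
  "loop_inv N h n k cnt T m \<longleftrightarrow> m 0 = n \<and> m 1 = k \<and> m 2 = N - n \<and> n \<le> N \<and> k \<le> n \<and>
     m 4 = 7 + cnt \<and> cnt + k = h \<and> T = (\<lambda>j. m (7 + j)) ` {..<cnt} \<and> card T = cnt \<and>
     T \<subseteq> {..<N - n}"

definition compare_inv ::
    "nat \<Rightarrow> nat \<Rightarrow> nat \<Rightarrow> nat \<Rightarrow> nat \<Rightarrow> nat set \<Rightarrow> nat \<Rightarrow> (nat \<Rightarrow> nat) \<Rightarrow> bool" where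
  "compare_inv N h n k cnt T r m \<longleftrightarrow> loop_inv N h n k cnt T m \<and> 0 < k \<and> k < n \<and> m 3 = r \<and> r < n"

lemma loop_inv_init: "h \<le> N \<Longrightarrow> loop_inv N h N h 0 {} ((\<lambda>_. 0)(0 := N, 1 := h, 4 := 7))"
  by (simp add: loop_inv_def)

lemma loop_inv_scratch_upd:
  assumes "loop_inv N h n k cnt T m" "a \<in> {3, 5, 6}"
  shows "loop_inv N h n k cnt T (m(a := v))"
proof -
  have "(\<lambda>j. (m(a := v)) (7 + j)) = (\<lambda>j. m (7 + j))"
    using assms(2) by auto
  then show ?thesis
    using assms unfolding loop_inv_def by auto
qed

lemma loop_inv_choose:
  assumes "loop_inv N h n k cnt T m" "0 < k"
  shows "loop_inv N h (n - 1) (k - 1) (Suc cnt) (insert (N - n) T)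
     (m(7 + cnt := N - n, 5 := 1, 4 := 8 + cnt, 1 := k - 1, 5 := 1, 2 := N - n + 1, 0 := n - 1,
        5 := 0))"
    (is "loop_inv _ _ _ _ _ _ ?m")
proof -
  from assms have T: "T = (\<lambda>j. m (7 + j)) ` {..<cnt}" "card T = cnt" "T \<subseteq> {..<N - n}"
    by (auto simp: loop_inv_def)
  have "(\<lambda>j. ?m (7 + j)) ` {..<Suc cnt} = insert (?m (7 + cnt)) ((\<lambda>j. ?m (7 + j)) ` {..<cnt})"
    by (simp only: lessThan_Suc image_insert)
  also have "(\<lambda>j. ?m (7 + j)) ` {..<cnt} = T"
    unfolding T(1) by (rule image_cong) auto
  finally have "(\<lambda>j. ?m (7 + j)) ` {..<Suc cnt} = insert (N - n) T"
    by simp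
  moreover have "N - n \<notin> T" "finite T"
    using T by (auto simp: card_ge_0_finite)
  ultimately show ?thesis
    using assms T unfolding loop_inv_def by auto
qed

lemma loop_inv_skip:
  assumes "loop_inv N h n k cnt T m" "k < n"
  shows "loop_inv N h (n - 1) k cnt T (m(5 := 1, 2 := N - n + 1, 0 := n - 1, 5 := 0))"
    (is "loop_inv _ _ _ _ _ _ ?m")
proof -
  from assms have T: "T = (\<lambda>j. m (7 + j)) ` {..<cnt}"
    by (simp add: loop_inv_def)
  have "(\<lambda>j. ?m (7 + j)) ` {..<cnt} = T"
    unfolding T by (rule image_cong) auto
  then show ?thesis
    using assms unfolding loop_inv_def by auto
qed

definition silent :: "(config \<Rightarrow> bool) \<Rightarrow> bool" where
  "silent Q \<longleftrightarrow> (\<forall>pc m. \<not> halted sampler (pc, m, 0) \<longrightarrow> \<not> Q (pc, m, 0))"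

lemma silentD: "silent Q \<Longrightarrow> \<not> halted sampler (pc, m, 0) \<Longrightarrow> Q (pc, m, 0) = False"
  by (simp add: silent_def)

lemmas trace_simps = halted_def step_def sampler_def numeral_2_eq_2[symmetric]

lemma reach_init:
  assumes "silent Q"
  shows "reach_prob sampler Q (init_config N h) =
    reach_prob sampler Q (1, (\<lambda>_. 0)(0 := N, 1 := h, 4 := 7), 0)"
  using assms unfolding init_config_def
  by (simp add: reach_prob_deterministic[where D = "{0}"] silentD trace_simps)

lemma reach_choose:
  assumes "silent Q" "loop_inv N h n k cnt T m" "0 < k"
  obtains M where "loop_inv N h (n - 1) (k - 1) (Suc cnt) (insert (N - n) T) M"
    "reach_prob sampler Q (18, m, 0) = reach_prob sampler Q (1, M, 0)"
proof
  show "loop_inv N h (n - 1) (k - 1) (Suc cnt) (insert (N - n) T)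
     (m(7 + cnt := N - n, 5 := 1, 4 := 8 + cnt, 1 := k - 1, 5 := 1, 2 := N - n + 1, 0 := n - 1,
        5 := 0))"
    using assms(2,3) by (rule loop_inv_choose)
  show "reach_prob sampler Q (18, m, 0) = reach_prob sampler Q (1,
     m(7 + cnt := N - n, 5 := 1, 4 := 8 + cnt, 1 := k - 1, 5 := 1, 2 := N - n + 1, 0 := n - 1,
       5 := 0), 0)"
    using assms
    by (simp add: reach_prob_deterministic[where D = "{18, 19, 20, 21, 22, 23, 24, 25, 26}"]
        silentD trace_simps loop_inv_def)
qed

lemma reach_skip:
  assumes "silent Q" "loop_inv N h n k cnt T m" "k < n"
  obtains M where "loop_inv N h (n - 1) k cnt T M"
    "reach_prob sampler Q (22, m, 0) = reach_prob sampler Q (1, M, 0)"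
proof
  show "loop_inv N h (n - 1) k cnt T (m(5 := 1, 2 := N - n + 1, 0 := n - 1, 5 := 0))"
    using assms(2,3) by (rule loop_inv_skip)
  show "reach_prob sampler Q (22, m, 0) =
      reach_prob sampler Q (1, m(5 := 1, 2 := N - n + 1, 0 := n - 1, 5 := 0), 0)"
    using assms
    by (simp add: reach_prob_deterministic[where D = "{22, 23, 24, 25, 26}"] silentD trace_simps
        loop_inv_def)
qed

lemma reach_loop_Suc_cases [consumes 2]:
  assumes silent: "silent Q" and inv: "loop_inv N h (Suc n) k cnt T m"
  obtains (skip_all) M where "k = 0" "loop_inv N h n k cnt T M"
      "reach_prob sampler Q (1, m, 0) = reach_prob sampler Q (1, M, 0)"
    | (choose_all) M where "k = Suc n" "loop_inv N h n (k - 1) (Suc cnt) (insert (N - Suc n) T) M"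
      "reach_prob sampler Q (1, m, 0) = reach_prob sampler Q (1, M, 0)"
    | (compare) m' where "0 < k" "k < Suc n" "compare_inv N h (Suc n) k cnt T k m'"
      "reach_prob sampler Q (1, m, 0) = reach_prob sampler Q (7, m', 0)"
proof -
  from inv have "k \<le> Suc n"
    by (simp add: loop_inv_def)
  then consider "k = 0" | "k = Suc n" | "0 < k" "k < Suc n"
    by linarith
  then show thesis
  proof cases
    case 1
    have "reach_prob sampler Q (1, m, 0) = reach_prob sampler Q (22, m, 0)"
      using silent inv 1
      by (simp add: reach_prob_deterministic[where D = "{1, 2}"] silentD trace_simps loop_inv_def)
    moreover obtain M where "loop_inv N h n k cnt T M"
      "reach_prob sampler Q (22, m, 0) = reach_prob sampler Q (1, M, 0)"
      using reach_skip[OF silent inv] 1 by auto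
    ultimately show thesis
      using that(1) 1 by simp
  next
    case 2
    have inv5: "loop_inv N h (Suc n) k cnt T (m(5 := 0))"
      using inv by (rule loop_inv_scratch_upd) simp
    obtain M where "loop_inv N h n (k - 1) (Suc cnt) (insert (N - Suc n) T) M"
      "reach_prob sampler Q (18, m(5 := 0), 0) = reach_prob sampler Q (1, M, 0)"
      using reach_choose[OF silent inv5] 2 by auto
    moreover have "reach_prob sampler Q (1, m, 0) = reach_prob sampler Q (18, m(5 := 0), 0)"
      using silent inv 2
      by (simp add: reach_prob_deterministic[where D = "{1, 2, 3, 4}"] silentD trace_simps
          loop_inv_def)
    ultimately show thesis
      using that(2) 2 by simp
  next
    case 3
    have "compare_inv N h (Suc n) k cnt T k (m(5 := Suc n - k, 3 := k))"
      unfolding compare_inv_def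
      by (intro conjI loop_inv_scratch_upd inv) (use inv 3 in \<open>auto simp: loop_inv_def\<close>)
    moreover have "reach_prob sampler Q (1, m, 0) =
        reach_prob sampler Q (7, m(5 := Suc n - k, 3 := k), 0)"
      using silent inv 3
      by (simp add: reach_prob_deterministic[where D = "{1, 2, 3, 4, 5, 6}"] silentD trace_simps
          loop_inv_def)
    ultimately show thesis
      using that(3) 3 by blast
  qed
qed

lemma reach_compare_bit:
  assumes "silent Q" "compare_inv N h n k cnt T r m"
  shows "reach_prob sampler Q (7, m, 0) =
    (reach_prob sampler (Q \<circ> count_bit) (9, m(3 := r + r, 6 := 1), 0) +
     reach_prob sampler (Q \<circ> count_bit) (9, m(3 := r + r, 6 := 0), 0)) / 2"
proof -
  have "reach_prob sampler Q (7, m, 0) = reach_prob sampler Q (8, m(3 := r + r), 0)"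
    using assms
    by (simp add: reach_prob_deterministic[where D = "{7}"] silentD trace_simps compare_inv_def)
  also have "\<dots> = (reach_prob sampler (Q \<circ> count_bit) (9, m(3 := r + r, 6 := 1), 0) +
      reach_prob sampler (Q \<circ> count_bit) (9, m(3 := r + r, 6 := 0), 0)) / 2"
    using assms(1) by (subst reach_prob_Rand[where r = 6]) (simp_all add: silentD trace_simps)
  finally show ?thesis .
qed

lemma reach_compare_step:
  assumes "silent Q" "silent (Q \<circ> count_bit)" and cmp: "compare_inv N h n k cnt T r m"
  obtains m1 m2 where "loop_inv N h n k cnt T m1"
    "compare_inv N h n k cnt T (if n \<le> r + r then r + r - n else r + r) m2"
    "reach_prob sampler Q (7, m, 0) =
      (reach_prob sampler (Q \<circ> count_bit) (if n \<le> r + r then 18 else 22, m1, 0) +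
       reach_prob sampler (Q \<circ> count_bit) (7, m2, 0)) / 2"
proof -
  from cmp have inv: "loop_inv N h n k cnt T m" "0 < k" "k < n" "m 3 = r" "r < n" "m 0 = n"
    by (auto simp: compare_inv_def loop_inv_def)
  note Q_running = silentD[OF assms(2), unfolded comp_apply]
  let ?m1 = "m(3 := r + r, 6 := 1)" and ?m0 = "m(3 := r + r, 6 := 0)"
  have split: "reach_prob sampler Q (7, m, 0) =
      (reach_prob sampler (Q \<circ> count_bit) (9, ?m1, 0) +
       reach_prob sampler (Q \<circ> count_bit) (9, ?m0, 0)) / 2"
    using assms(1) cmp by (rule reach_compare_bit)
  show thesis
  proof (cases "n \<le> r + r")
    case True
    have "reach_prob sampler (Q \<circ> count_bit) (9, ?m0, 0) =
        reach_prob sampler (Q \<circ> count_bit) (18, ?m0(5 := 0, 3 := r + r - n), 0)"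
      using inv True by (simp add: reach_prob_deterministic[where D = "{9, 10, 14, 15}"]
        Q_running trace_simps)
    moreover have "reach_prob sampler (Q \<circ> count_bit) (9, ?m1, 0) =
        reach_prob sampler (Q \<circ> count_bit) (7, ?m1(5 := 0, 3 := r + r - n, 5 := 0), 0)"
      using inv True by (simp add: reach_prob_deterministic[where D = "{9, 10, 14, 15, 16, 17}"]
        Q_running trace_simps)
    moreover have "loop_inv N h n k cnt T (?m0(5 := 0, 3 := r + r - n))"
      by (intro loop_inv_scratch_upd inv(1)) auto
    moreover have "compare_inv N h n k cnt T (r + r - n) (?m1(5 := 0, 3 := r + r - n, 5 := 0))"
      unfolding compare_inv_def by (intro conjI loop_inv_scratch_upd inv(1)) (use inv True in auto)
    ultimately show thesis
      using that True split by auto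
  next
    case False
    have "reach_prob sampler (Q \<circ> count_bit) (9, ?m0, 0) =
        reach_prob sampler (Q \<circ> count_bit) (7, ?m0(5 := n - (r + r)), 0)"
      using inv False by (simp add: reach_prob_deterministic[where D = "{9, 10, 11}"]
        Q_running trace_simps)
    moreover have "reach_prob sampler (Q \<circ> count_bit) (9, ?m1, 0) =
        reach_prob sampler (Q \<circ> count_bit) (22, ?m1(5 := 0), 0)"
      using inv False by (simp add: reach_prob_deterministic[where D = "{9, 10, 11, 12, 13}"]
        Q_running trace_simps)
    moreover have "compare_inv N h n k cnt T (r + r) (?m0(5 := n - (r + r)))"
      unfolding compare_inv_def by (intro conjI loop_inv_scratch_upd inv(1)) (use inv False in auto)
    moreover have "loop_inv N h n k cnt T (?m1(5 := 0))"
      by (intro loop_inv_scratch_upd inv(1)) auto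
    ultimately show thesis
      using that False split by auto
  qed
qed

lemma ram_output_finish:
  assumes "loop_inv N h 0 k cnt T m" "0 < cnt"
  shows "ram_output (39, m(5 := 7, 6 := cnt, 5 := 1, 0 := 6 + cnt, 5 := 7,
     1 := m 7, 2 := m 7, 3 := m 7, 4 := m 7, 6 := m 7, 5 := m 7), 0) = T"
    (is "ram_output (_, ?M, _) = _")
proof -
  from assms have T: "T = (\<lambda>j. m (7 + j)) ` {..<cnt}"
    by (simp add: loop_inv_def)
  have M: "?M (Suc i) = (if i < 6 then m 7 else m (Suc i))" for i
    by (auto simp: numeral_eq_Suc)
  have "(\<lambda>i. ?M (Suc i)) ` {..<6 + cnt} = (\<lambda>i. ?M (Suc i)) ` ({..<6} \<union> {6..<6 + cnt})"
    by (simp add: ivl_disj_un_one(2))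
  also have "\<dots> = {m 7} \<union> (\<lambda>j. m (7 + j)) ` {..<cnt}"
  proof -
    have "(\<lambda>i. ?M (Suc i)) ` {..<6} = {m 7}"
      by (auto simp: M intro!: image_eqI[of _ _ 0])
    moreover have "(\<lambda>i. ?M (Suc i)) ` {6..<6 + cnt} = (\<lambda>j. m (7 + j)) ` {..<cnt}"
    proof -
      have "{6..<6 + cnt} = (\<lambda>j. 6 + j) ` {..<cnt}"
        by (simp add: image_add_atLeastLessThan lessThan_atLeast0 add.commute)
      then have "(\<lambda>i. ?M (Suc i)) ` {6..<6 + cnt} = (\<lambda>j. ?M (Suc (6 + j))) ` {..<cnt}"
        by (simp only: image_image)
      also have "\<dots> = (\<lambda>j. m (7 + j)) ` {..<cnt}"
        by (rule image_cong) simp_all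
      finally show ?thesis .
    qed
    ultimately show ?thesis
      by (simp only: image_Un)
  qed
  also have "\<dots> = T"
    using T assms(2) by (auto intro: image_eqI[of _ _ 0])
  finally have "(\<lambda>i. ?M (Suc i)) ` {..<6 + cnt} = T" .
  moreover have "?M 0 = 6 + cnt"
    by simp
  ultimately show ?thesis
    unfolding ram_output_def Let_def fst_conv snd_conv by (simp only:)
qed

lemma reach_finish:
  assumes "silent Q" "loop_inv N h 0 k cnt T m"
  obtains c where "halted sampler c" "ram_output c = T" "bits_used c = 0"
    "reach_prob sampler Q (1, m, 0) = reach_prob sampler Q c"
proof (cases "cnt = 0")
  case True
  then have "T = {}"
    using assms(2) by (simp add: loop_inv_def)
  moreover have "reach_prob sampler Q (1, m, 0) = reach_prob sampler Q (41, m(5 := 7, 6 := 0, 0 := 0), 0)"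
    using assms True
    by (simp add: reach_prob_deterministic[where D = "{1, 27, 28, 29, 40}"] silentD trace_simps
        loop_inv_def)
  ultimately show thesis
    by (intro that[of "(41, m(5 := 7, 6 := 0, 0 := 0), 0)"]) (simp_all add: halted_def sampler_def ram_output_def bits_used_def)
next
  case False
  let ?c = "(39, m(5 := 7, 6 := cnt, 5 := 1, 0 := 6 + cnt, 5 := 7,
     1 := m 7, 2 := m 7, 3 := m 7, 4 := m 7, 6 := m 7, 5 := m 7), 0)"
  have "reach_prob sampler Q (1, m, 0) = reach_prob sampler Q ?c"
    using assms False
    by (simp add: reach_prob_deterministic[where D = "{1, 27, 28, 29, 30, 31, 32, 33, 34, 35, 36,
        37, 38}"] silentD trace_simps loop_inv_def)
  then show thesis
    using ram_output_finish[OF assms(2)] False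
    by (intro that[of ?c]) (simp_all add: halted_def sampler_def bits_used_def)
qed

section \<open>Uniformity\<close>

lemma eq_0_if_halving:
  fixes f :: "'a \<Rightarrow> real"
  assumes bounded: "\<And>x. P x \<Longrightarrow> \<bar>f x\<bar> \<le> B"
    and halving: "\<And>x. P x \<Longrightarrow> \<exists>y. P y \<and> f x = f y / 2"
    and "P x"
  shows "f x = 0"
proof -
  have "\<bar>f x\<bar> \<le> B / 2 ^ j" if "P x" for j x
    using that
  proof (induction j arbitrary: x)
    case 0
    then show ?case
      using bounded by simp
  next
    case (Suc j)
    then obtain y where "P y" "f x = f y / 2"
      using halving by blast
    then show ?case
      using Suc.IH[of y] by simp
  qed
  with \<open>P x\<close> have le: "\<bar>f x\<bar> \<le> B / 2 ^ j" for j
    by blast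
  show "f x = 0"
  proof (rule ccontr)
    assume "f x \<noteq> 0"
    obtain j where "B / \<bar>f x\<bar> < 2 ^ j"
      using real_arch_pow[of 2 "B / \<bar>f x\<bar>"] by auto
    with \<open>f x \<noteq> 0\<close> have "B / 2 ^ j < \<bar>f x\<bar>"
      by (simp add: field_simps)
    with le[of j] show False
      by simp
  qed
qed

text \<open>Each pass of the comparison loop ends with probability 1/2 and otherwise restarts
  from the remainder \<open>2 r mod n\<close>; so the difference between the reachability probability
  and the claimed value halves with each pass, and must vanish.\<close>

lemma reach_compare_eq:
  assumes "silent Q" "Q \<circ> count_bit = Q"
    and choose: "\<And>m. loop_inv N h n k cnt T m \<Longrightarrow> reach_prob sampler Q (18, m, 0) = A"
    and skip: "\<And>m. loop_inv N h n k cnt T m \<Longrightarrow> reach_prob sampler Q (22, m, 0) = B"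
    and "0 \<le> A" "A \<le> 1" "0 \<le> B" "B \<le> 1"
    and "compare_inv N h n k cnt T r m"
  shows "reach_prob sampler Q (7, m, 0) = r / n * A + (1 - r / n) * B"
proof -
  define target where "target r = real r / real n * A + (1 - real r / real n) * B" for r
  let ?P = "\<lambda>(r, m). compare_inv N h n k cnt T r m"
  let ?f = "\<lambda>(r, m). reach_prob sampler Q (7, m, 0) - target r"
  have "?f (r, m) = 0"
  proof (rule eq_0_if_halving[where P = ?P and B = 1])
    fix x
    assume "?P x"
    then obtain r m where x: "x = (r, m)" and "r < n"
      by (cases x) (auto simp: compare_inv_def)
    then have u: "0 \<le> real r / real n" "real r / real n \<le> 1"
      by auto
    have "0 \<le> target r"
      unfolding target_def using u assms(5,7) by simp
    moreover have "target r \<le> 1"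
      unfolding target_def using u assms(6,8) by (intro convex_bound_le) auto
    ultimately have "0 \<le> target r \<and> target r \<le> 1"
      by blast
    then show "\<bar>?f x\<bar> \<le> 1"
      using reach_prob_nonneg[of sampler Q "(7, m, 0)"] reach_prob_le_1[of sampler Q "(7, m, 0)"]
      by (simp add: x abs_le_iff)
  next
    fix x
    assume "?P x"
    then obtain r m where x: "x = (r, m)" and cmp: "compare_inv N h n k cnt T r m"
      by (cases x) auto
    then have n: "0 < n"
      by (simp add: compare_inv_def)
    obtain m1 m2 where m1: "loop_inv N h n k cnt T m1"
      and m2: "compare_inv N h n k cnt T (if n \<le> r + r then r + r - n else r + r) m2"
      and split: "reach_prob sampler Q (7, m, 0) =
        (reach_prob sampler Q (if n \<le> r + r then 18 else 22, m1, 0) +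
         reach_prob sampler Q (7, m2, 0)) / 2"
      using reach_compare_step[of Q, OF _ _ cmp] assms(1,2) by metis
    show "\<exists>y. ?P y \<and> ?f x = ?f y / 2"
    proof (cases "n \<le> r + r")
      case True
      have "target r = (A + target (r + r - n)) / 2"
        using n True by (simp add: target_def of_nat_diff field_simps)
      then show ?thesis
        using True m2 split choose[OF m1] by (intro exI[of _ "(r + r - n, m2)"]) (simp add: x)
    next
      case False
      have "target r = (B + target (r + r)) / 2"
        using n by (simp add: target_def field_simps)
      then show ?thesis
        using False m2 split skip[OF m1] by (intro exI[of _ "(r + r, m2)"]) (simp add: x)
    qed
  qed (use assms in simp)
  then show ?thesis
    by (simp add: target_def)
qed

definition outputs :: "nat set \<Rightarrow> config \<Rightarrow> bool" where
  "outputs S c \<longleftrightarrow> halted sampler c \<and> ram_output c = S"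

lemma silent_outputs: "silent (outputs S)"
  by (simp add: silent_def outputs_def)

lemma outputs_count_bit: "outputs S \<circ> count_bit = outputs S"
  by (simp add: fun_eq_iff outputs_def count_bit_def ram_output_def halted_def)

definition sel_prob :: "nat set \<Rightarrow> nat \<Rightarrow> nat \<Rightarrow> nat \<Rightarrow> nat set \<Rightarrow> real" where
  "sel_prob S i n k T = (if T = S \<inter> {..<i} then 1 / real (n choose k) else 0)"

lemma sel_prob_nonneg: "0 \<le> sel_prob S i n k T"
  by (simp add: sel_prob_def)

lemma sel_prob_le_1: "sel_prob S i n k T \<le> 1"
  by (cases "n choose k = 0") (auto simp: sel_prob_def divide_le_eq Suc_le_eq)

lemma insert_eq_Int_lessThan_Suc_iff:
  "T \<subseteq> {..<i} \<Longrightarrow> insert i T = S \<inter> {..<Suc i} \<longleftrightarrow> T = S \<inter> {..<i} \<and> i \<in> S"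
  by (auto simp: lessThan_Suc)

lemma eq_Int_lessThan_Suc_iff:
  "T \<subseteq> {..<i} \<Longrightarrow> T = S \<inter> {..<Suc i} \<longleftrightarrow> T = S \<inter> {..<i} \<and> i \<notin> S"
  by (auto simp: lessThan_Suc)

lemma sel_prob_skip_all:
  assumes "T \<subseteq> {..<i}" "finite S" "card T = card S"
  shows "sel_prob S (Suc i) n 0 T = sel_prob S i (Suc n) 0 T"
proof -
  have "i \<notin> S" if "T = S \<inter> {..<i}"
  proof -
    have "T = S"
      using that assms(2,3) by (metis Int_lower1 card_subset_eq)
    then show ?thesis
      using that by auto
  qed
  then have "T = S \<inter> {..<Suc i} \<longleftrightarrow> T = S \<inter> {..<i}"
    using eq_Int_lessThan_Suc_iff[OF assms(1), of S] by blast
  then show ?thesis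
    by (simp add: sel_prob_def)
qed

lemma sel_prob_choose_all:
  assumes "T \<subseteq> {..<i}" "S \<subseteq> {..<Suc i + n}" "card T + Suc n = card S"
  shows "sel_prob S (Suc i) n n (insert i T) = sel_prob S i (Suc n) (Suc n) T"
proof -
  have "i \<in> S" if T: "T = S \<inter> {..<i}"
  proof -
    have "finite S"
      using assms(2) finite_subset by blast
    then have "card (S - T) = Suc n"
      using T assms(3) by (simp add: card_Diff_subset)
    moreover have "S - T \<subseteq> {i..<Suc i + n}"
      using T assms(2) by auto
    ultimately have "S - T = {i..<Suc i + n}"
      by (intro card_subset_eq) auto
    then show ?thesis
      by auto
  qed
  then have "insert i T = S \<inter> {..<Suc i} \<longleftrightarrow> T = S \<inter> {..<i}"
    using insert_eq_Int_lessThan_Suc_iff[OF assms(1), of S] by blast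
  then show ?thesis
    by (simp add: sel_prob_def)
qed

lemma sel_prob_split:
  assumes T: "T \<subseteq> {..<i}" and k: "0 < k" "k \<le> n"
  shows "real k / real (Suc n) * sel_prob S (Suc i) n (k - 1) (insert i T) +
      (1 - real k / real (Suc n)) * sel_prob S (Suc i) n k T = sel_prob S i (Suc n) k T"
proof -
  note iff = insert_eq_Int_lessThan_Suc_iff[OF T, of S] eq_Int_lessThan_Suc_iff[OF T, of S]
  consider "T \<noteq> S \<inter> {..<i}" | "T = S \<inter> {..<i}" "i \<in> S" | "T = S \<inter> {..<i}" "i \<notin> S"
    by blast
  then show ?thesis
  proof cases
    case 1
    then show ?thesis
      unfolding sel_prob_def iff by simp
  next
    case 2
    obtain j where j: "k = Suc j"
      using k by (cases k) auto
    have "real (Suc n) * real (n choose j) = real (Suc n choose k) * real k"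
      unfolding j of_nat_mult[symmetric] using Suc_times_binomial_eq[of n j] by simp
    then have "real k / real (Suc n) * (1 / real (n choose (k - 1))) = 1 / real (Suc n choose k)"
      using j by (simp add: divide_simps)
    then show ?thesis
      unfolding sel_prob_def iff using 2 by simp
  next
    case 3
    have "real (Suc n - k) * real (Suc n choose k) = real (Suc n) * real (n choose k)"
      unfolding of_nat_mult[symmetric] using binomial_absorb_comp[of "Suc n" k] by simp
    moreover have "1 - real k / real (Suc n) = real (Suc n - k) / real (Suc n)"
      using k by (simp add: of_nat_diff divide_simps)
    ultimately have "(1 - real k / real (Suc n)) * (1 / real (n choose k)) = 1 / real (Suc n choose k)"
      using k by (simp add: divide_simps)
    then show ?thesis
      unfolding sel_prob_def iff using 3 by simp
  qed
qed

lemma reach_outputs_choose: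
  assumes IH: "\<And>k cnt T m. loop_inv N h n k cnt T m \<Longrightarrow>
      reach_prob sampler (outputs S) (1, m, 0) = sel_prob S (N - n) n k T"
    and "loop_inv N h (Suc n) k cnt T m" "0 < k"
  shows "reach_prob sampler (outputs S) (18, m, 0) =
    sel_prob S (N - n) n (k - 1) (insert (N - Suc n) T)"
proof -
  obtain M where "loop_inv N h n (k - 1) (Suc cnt) (insert (N - Suc n) T) M"
    "reach_prob sampler (outputs S) (18, m, 0) = reach_prob sampler (outputs S) (1, M, 0)"
    using reach_choose[OF silent_outputs assms(2,3)] by auto
  then show ?thesis
    using IH by simp
qed

lemma reach_outputs_skip:
  assumes IH: "\<And>k cnt T m. loop_inv N h n k cnt T m \<Longrightarrow>
      reach_prob sampler (outputs S) (1, m, 0) = sel_prob S (N - n) n k T"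
    and "loop_inv N h (Suc n) k cnt T m" "k < Suc n"
  shows "reach_prob sampler (outputs S) (22, m, 0) = sel_prob S (N - n) n k T"
proof -
  obtain M where "loop_inv N h n k cnt T M"
    "reach_prob sampler (outputs S) (22, m, 0) = reach_prob sampler (outputs S) (1, M, 0)"
    using reach_skip[OF silent_outputs assms(2,3)] by auto
  then show ?thesis
    using IH by simp
qed

lemma reach_outputs_loop:
  assumes S: "S \<subseteq> {..<N}" "card S = h"
  shows "loop_inv N h n k cnt T m \<Longrightarrow>
    reach_prob sampler (outputs S) (1, m, 0) = sel_prob S (N - n) n k T"
proof (induction n arbitrary: k cnt T m)
  case 0
  obtain c where c: "halted sampler c" "ram_output c = T"
    "reach_prob sampler (outputs S) (1, m, 0) = reach_prob sampler (outputs S) c"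
    using reach_finish[OF silent_outputs 0] by metis
  have "reach_prob sampler (outputs S) c = (if T = S then 1 else 0)"
    using c by (simp add: reach_prob_halted outputs_def eq_commute)
  moreover have "k = 0"
    using 0 by (simp add: loop_inv_def)
  moreover have "S \<inter> {..<N} = S"
    using S by auto
  ultimately show ?case
    using c(3) by (simp add: sel_prob_def)
next
  case (Suc n)
  let ?i = "N - Suc n"
  from Suc.prems have inv: "Suc n \<le> N" "T \<subseteq> {..<?i}" "card T + k = card S"
    using S(2) by (auto simp: loop_inv_def)
  then have N: "N - n = Suc ?i" "N = Suc ?i + n"
    by auto
  from silent_outputs[of S] Suc.prems show ?case
  proof (cases rule: reach_loop_Suc_cases)
    case (skip_all M)
    then have "reach_prob sampler (outputs S) (1, m, 0) = sel_prob S (Suc ?i) n 0 T"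
      using Suc.IH N(1) by simp
    also have "\<dots> = sel_prob S ?i (Suc n) 0 T"
      using inv S skip_all(1) by (intro sel_prob_skip_all) (auto intro: finite_subset)
    finally show ?thesis
      using skip_all(1) by simp
  next
    case (choose_all M)
    then have "reach_prob sampler (outputs S) (1, m, 0) = sel_prob S (Suc ?i) n n (insert ?i T)"
      using Suc.IH N(1) by simp
    also have "\<dots> = sel_prob S ?i (Suc n) (Suc n) T"
      using inv S choose_all(1) N(2) by (intro sel_prob_choose_all) auto
    finally show ?thesis
      using choose_all(1) by simp
  next
    case (compare m')
    note choose = reach_outputs_choose[OF Suc.IH _ compare(1), unfolded N(1)]
    note skip = reach_outputs_skip[OF Suc.IH _ compare(2), unfolded N(1)]
    have "reach_prob sampler (outputs S) (7, m', 0) =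
        k / Suc n * sel_prob S (Suc ?i) n (k - 1) (insert ?i T) +
        (1 - k / Suc n) * sel_prob S (Suc ?i) n k T"
      by (rule reach_compare_eq[OF silent_outputs outputs_count_bit choose skip
          sel_prob_nonneg sel_prob_le_1 sel_prob_nonneg sel_prob_le_1 compare(3)])
    also have "\<dots> = sel_prob S ?i (Suc n) k T"
      using inv compare(1,2) by (intro sel_prob_split) auto
    finally show ?thesis
      using compare(4) by simp
  qed
qed

theorem sampler_uniform:
  assumes "h \<le> N" "S \<subseteq> {..<N}" "card S = h"
  shows "measure coins {\<omega> \<in> space coins. \<exists>t. halted sampler (run sampler \<omega> N h t) \<and>
      ram_output (run sampler \<omega> N h t) = S} = 1 / real (N choose h)"
proof -
  have "measure coins {\<omega> \<in> space coins. \<exists>t. halted sampler (run sampler \<omega> N h t) \<and>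
      ram_output (run sampler \<omega> N h t) = S} = reach_prob sampler (outputs S) (init_config N h)"
    by (simp add: reach_prob_def outputs_def run_eq_run_from)
  also have "\<dots> = reach_prob sampler (outputs S) (1, (\<lambda>_. 0)(0 := N, 1 := h, 4 := 7), 0)"
    by (rule reach_init[OF silent_outputs])
  also have "\<dots> = sel_prob S 0 N h {}"
    using reach_outputs_loop[OF assms(2,3) loop_inv_init[OF assms(1)]] by simp
  also have "\<dots> = 1 / real (N choose h)"
    by (simp add: sel_prob_def)
  finally show ?thesis .
qed

section \<open>Number of random bits\<close>

definition bits_at_least :: "nat \<Rightarrow> config \<Rightarrow> bool" where
  "bits_at_least K c \<longleftrightarrow> K \<le> bits_used c"

lemma silent_bits_at_least: "0 < K \<Longrightarrow> silent (bits_at_least K)"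
  by (simp add: silent_def bits_at_least_def bits_used_def)

lemma bits_at_least_count_bit: "bits_at_least (Suc K) \<circ> count_bit = bits_at_least K"
  by (simp add: fun_eq_iff bits_at_least_def bits_used_def count_bit_def)

text \<open>The weight \<open>3 ^ n\<close> pays for one compared bit: \<open>(3 ^ (n - 1) + 3 ^ n) / 2 = 3 ^ n * (2 / 3)\<close>.\<close>

lemma reach_bits_compare_Suc:
  assumes loop: "\<And>n k cnt T m. loop_inv N h n k cnt T m \<Longrightarrow>
      reach_prob sampler (bits_at_least K) (1, m, 0) \<le> 3 ^ n * (2 / 3) ^ K"
    and compare: "\<And>n k cnt T r m. compare_inv N h n k cnt T r m \<Longrightarrow>
      reach_prob sampler (bits_at_least K) (7, m, 0) \<le> 3 ^ n * (2 / 3) ^ K"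
    and cmp: "compare_inv N h n k cnt T r m"
  shows "reach_prob sampler (bits_at_least (Suc K)) (7, m, 0) \<le> 3 ^ n * (2 / 3) ^ Suc K"
proof -
  from cmp have k: "0 < k" "k < n"
    by (auto simp: compare_inv_def)
  then have pow: "(3 :: real) ^ n = 3 * 3 ^ (n - 1)"
    by (cases n) auto
  show ?thesis
  proof (cases "K = 0")
    case True
    have "reach_prob sampler (bits_at_least (Suc K)) (7, m, 0) \<le> 1"
      by (rule reach_prob_le_1)
    also have "1 \<le> 2 * (3 :: real) ^ (n - 1)"
      using one_le_power[of "3 :: real" "n - 1"] by linarith
    also have "\<dots> = 3 ^ n * (2 / 3) ^ Suc K"
      using True pow by simp
    finally show ?thesis .
  next
    case False
    then have silent: "silent (bits_at_least K)" "silent (bits_at_least (Suc K))"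
      by (simp_all add: silent_bits_at_least)
    obtain m1 m2 where m1: "loop_inv N h n k cnt T m1"
      and m2: "compare_inv N h n k cnt T (if n \<le> r + r then r + r - n else r + r) m2"
      and split: "reach_prob sampler (bits_at_least (Suc K)) (7, m, 0) =
        (reach_prob sampler (bits_at_least K) (if n \<le> r + r then 18 else 22, m1, 0) +
         reach_prob sampler (bits_at_least K) (7, m2, 0)) / 2"
      using reach_compare_step[OF silent(2) _ cmp] silent(1)
      unfolding bits_at_least_count_bit by blast
    have "reach_prob sampler (bits_at_least K) (if n \<le> r + r then 18 else 22, m1, 0) \<le>
        3 ^ (n - 1) * (2 / 3) ^ K"
    proof (cases "n \<le> r + r")
      case True
      obtain M where "loop_inv N h (n - 1) (k - 1) (Suc cnt) (insert (N - n) T) M"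
        "reach_prob sampler (bits_at_least K) (18, m1, 0) = reach_prob sampler (bits_at_least K) (1, M, 0)"
        using reach_choose[OF silent(1) m1 k(1)] by blast
      then show ?thesis
        using True loop by simp
    next
      case False
      obtain M where "loop_inv N h (n - 1) k cnt T M"
        "reach_prob sampler (bits_at_least K) (22, m1, 0) = reach_prob sampler (bits_at_least K) (1, M, 0)"
        using reach_skip[OF silent(1) m1 k(2)] by blast
      then show ?thesis
        using False loop by simp
    qed
    moreover have "reach_prob sampler (bits_at_least K) (7, m2, 0) \<le> 3 ^ n * (2 / 3) ^ K"
      using m2 by (rule compare)
    ultimately have "reach_prob sampler (bits_at_least (Suc K)) (7, m, 0) \<le>
        (3 ^ (n - 1) * (2 / 3) ^ K + 3 ^ n * (2 / 3) ^ K) / 2"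
      unfolding split by simp
    also have "\<dots> = 3 ^ n * (2 / 3) ^ Suc K"
      using pow by (simp add: field_simps)
    finally show ?thesis .
  qed
qed

lemma reach_bits_loop:
  assumes "0 < K"
    and compare_le: "\<And>n k cnt T r m. compare_inv N h n k cnt T r m \<Longrightarrow>
      reach_prob sampler (bits_at_least K) (7, m, 0) \<le> 3 ^ n * (2 / 3) ^ K"
  shows "loop_inv N h n k cnt T m \<Longrightarrow>
    reach_prob sampler (bits_at_least K) (1, m, 0) \<le> 3 ^ n * (2 / 3) ^ K"
proof (induction n arbitrary: k cnt T m)
  case 0
  obtain c where "halted sampler c" "bits_used c = 0"
    "reach_prob sampler (bits_at_least K) (1, m, 0) = reach_prob sampler (bits_at_least K) c"
    using reach_finish[OF silent_bits_at_least[OF assms(1)] 0] by metis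
  moreover from this have "reach_prob sampler (bits_at_least K) c = 0"
    using assms(1) by (simp add: reach_prob_halted bits_at_least_def)
  ultimately show ?case
    by simp
next
  case (Suc n)
  have IH: "reach_prob sampler (bits_at_least K) (1, M, 0) \<le> 3 ^ Suc n * (2 / 3) ^ K"
    if "loop_inv N h n k' cnt' T' M" for k' cnt' T' M
    using Suc.IH[OF that] by (rule order_trans) simp
  from silent_bits_at_least[OF assms(1)] Suc.prems show ?case
  proof (cases rule: reach_loop_Suc_cases)
    case (skip_all M)
    then show ?thesis
      using IH by simp
  next
    case (choose_all M)
    then show ?thesis
      using IH by simp
  next
    case (compare m')
    then show ?thesis
      using compare_le[OF compare(3)] by simp
  qed
qed

lemma reach_bits_at_least_le:
  "(\<forall>n k cnt T m. loop_inv N h n k cnt T m \<longrightarrow>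
      reach_prob sampler (bits_at_least K) (1, m, 0) \<le> 3 ^ n * (2 / 3) ^ K) \<and>
   (\<forall>n k cnt T r m. compare_inv N h n k cnt T r m \<longrightarrow>
      reach_prob sampler (bits_at_least K) (7, m, 0) \<le> 3 ^ n * (2 / 3) ^ K)"
proof (induction K)
  case 0
  have "reach_prob sampler Q c \<le> 3 ^ n * (2 / 3) ^ 0" for Q c and n :: nat
    by (rule order_trans[OF reach_prob_le_1]) simp
  then show ?case
    by blast
next
  case (Suc K)
  then have "compare_inv N h n k cnt T r m \<Longrightarrow>
      reach_prob sampler (bits_at_least (Suc K)) (7, m, 0) \<le> 3 ^ n * (2 / 3) ^ Suc K"
    for n k cnt T r m
    by (intro reach_bits_compare_Suc) blast+
  then show ?case
    using reach_bits_loop[of "Suc K"] by blast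
qed

theorem sampler_bits_tail:
  assumes "h \<le> N"
  shows "measure coins {\<omega> \<in> space coins. \<exists>t. K \<le> bits_used (run sampler \<omega> N h t)} \<le>
    3 ^ N * (2 / 3) ^ K"
proof (cases "K = 0")
  case True
  have "measure coins {\<omega> \<in> space coins. \<exists>t. K \<le> bits_used (run sampler \<omega> N h t)} \<le> 1"
    by (rule coins.prob_le_1)
  also have "1 \<le> 3 ^ N * (2 / 3 :: real) ^ K"
    using True by simp
  finally show ?thesis .
next
  case False
  have "measure coins {\<omega> \<in> space coins. \<exists>t. K \<le> bits_used (run sampler \<omega> N h t)} =
      reach_prob sampler (bits_at_least K) (init_config N h)"
    by (simp add: reach_prob_def bits_at_least_def run_eq_run_from)
  also have "\<dots> = reach_prob sampler (bits_at_least K) (1, (\<lambda>_. 0)(0 := N, 1 := h, 4 := 7), 0)"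
    using False by (intro reach_init silent_bits_at_least) simp
  also have "\<dots> \<le> 3 ^ N * (2 / 3) ^ K"
    using reach_bits_at_least_le loop_inv_init[OF assms] by blast
  finally show ?thesis .
qed

section \<open>Running time and word size\<close>

definition main_inv :: "nat \<Rightarrow> nat \<Rightarrow> (nat \<Rightarrow> nat) \<Rightarrow> bool" where
  "main_inv N h m \<longleftrightarrow> m 0 \<le> N \<and> m 2 = N - m 0 \<and> m 1 \<le> m 0 \<and> m 1 \<le> h \<and> m 4 = 7 + (h - m 1)"

definition line_inv :: "nat \<Rightarrow> nat \<Rightarrow> nat \<Rightarrow> (nat \<Rightarrow> nat) \<Rightarrow> bool" where
  "line_inv N h pc m \<longleftrightarrow> (
    if pc = 0 then m 0 = N \<and> m 1 = h \<and> m 2 = 0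
    else if pc = 1 then main_inv N h m
    else if pc = 2 then main_inv N h m \<and> 0 < m 0
    else if pc = 3 then main_inv N h m \<and> 0 < m 1
    else if pc = 4 then main_inv N h m \<and> 0 < m 1 \<and> m 5 = m 0 - m 1
    else if pc = 5 then main_inv N h m \<and> 0 < m 1 \<and> m 1 < m 0
    else if pc = 6 then main_inv N h m \<and> 0 < m 1 \<and> m 1 < m 0 \<and> m 3 = 0
    else if pc = 7 then main_inv N h m \<and> 0 < m 1 \<and> m 1 < m 0 \<and> m 3 < m 0
    else if pc = 8 \<or> pc = 9 then main_inv N h m \<and> 0 < m 1 \<and> m 1 < m 0 \<and> m 3 < 2 * m 0
    else if pc = 10 then
      main_inv N h m \<and> 0 < m 1 \<and> m 1 < m 0 \<and> m 3 < 2 * m 0 \<and> m 5 = m 0 - m 3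
    else if pc = 11 \<or> pc = 12 \<or> pc = 15 \<or> pc = 16 then
      main_inv N h m \<and> 0 < m 1 \<and> m 1 < m 0 \<and> m 3 < m 0
    else if pc = 13 \<or> pc = 17 then main_inv N h m \<and> 0 < m 1 \<and> m 1 < m 0 \<and> m 3 < m 0 \<and> m 5 = 0
    else if pc = 14 then
      main_inv N h m \<and> 0 < m 1 \<and> m 1 < m 0 \<and> m 0 \<le> m 3 \<and> m 3 < 2 * m 0
    else if pc = 18 \<or> pc = 19 then main_inv N h m \<and> 0 < m 1
    else if pc = 20 then main_inv N h m \<and> 0 < m 1 \<and> m 5 = 1
    else if pc = 21 then
      m 0 \<le> N \<and> m 2 = N - m 0 \<and> m 1 \<le> m 0 \<and> m 1 \<le> h \<and> 0 < m 1 \<and> m 4 = 8 + (h - m 1) \<and> m 5 = 1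
    else if pc = 22 then main_inv N h m \<and> m 1 < m 0
    else if pc = 23 then main_inv N h m \<and> m 1 < m 0 \<and> m 5 = 1
    else if pc = 24 then
      m 0 \<le> N \<and> m 2 = N - m 0 + 1 \<and> m 1 < m 0 \<and> m 1 \<le> h \<and> m 4 = 7 + (h - m 1) \<and> m 5 = 1
    else if pc = 25 then main_inv N h m
    else if pc = 26 then main_inv N h m \<and> m 5 = 0
    else pc < 42)"

definition line_weight :: "nat \<Rightarrow> nat" where
  "line_weight pc = (if pc = 7 \<or> pc = 8 then pc + 15 else if 9 \<le> pc \<and> pc \<le> 17 then pc + 3
     else if pc = 25 then 0 else if pc = 26 then 1 else if pc < 27 then pc + 2 else pc)"

definition mem_bounded :: "nat \<Rightarrow> (nat \<Rightarrow> nat) \<Rightarrow> bool" where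
  "mem_bounded N m \<longleftrightarrow> (\<forall>a. m a \<le> 2 * N + 8)"

lemma mem_bounded_upd [simp]:
  "mem_bounded N m \<Longrightarrow> v \<le> 2 * N + 8 \<Longrightarrow> mem_bounded N (m(r := v))"
  by (simp add: mem_bounded_def)

lemma mem_bounded_le [simp]: "mem_bounded N m \<Longrightarrow> m a \<le> 2 * N + 8"
  by (simp add: mem_bounded_def)

lemma mem_bounded_diff [simp]: "mem_bounded N m \<Longrightarrow> m a - x \<le> 2 * N + 8"
  by (simp add: mem_bounded_def le_diff_iff' le_trans[OF diff_le_self])

text \<open>A potential argument: before the output phase, at most 12 steps are spent per random
  bit and at most 30 per processed element, up to an offset depending on the line only.\<close>

definition run_inv :: "nat \<Rightarrow> nat \<Rightarrow> nat \<Rightarrow> config \<Rightarrow> bool" where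
  "run_inv N h t c \<longleftrightarrow> mem_bounded N (fst (snd c)) \<and> line_inv N h (fst c) (fst (snd c)) \<and>
     (\<not> halted sampler c \<longrightarrow>
       t \<le> 12 * snd (snd c) + 30 * (if 27 \<le> fst c then N else N - fst (snd c) 0) + line_weight (fst c))"

lemma run_inv_step:
  assumes hN: "h \<le> N" and inv: "run_inv N h t (pc, m, k)"
  shows "run_inv N h (Suc t) (step sampler \<omega> (pc, m, k))"
proof (cases "halted sampler (pc, m, k)")
  case True
  then show ?thesis
    using inv by (simp add: step_def run_inv_def)
next
  case False
  then have "pc < 42"
    by (simp add: halted_def)
  then have "pc = 0 \<or> pc = 1 \<or> pc = 2 \<or> pc = 3 \<or> pc = 4 \<or> pc = 5 \<or> pc = 6 \<or> pc = 7 \<or>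
    pc = 8 \<or> pc = 9 \<or> pc = 10 \<or> pc = 11 \<or> pc = 12 \<or> pc = 13 \<or> pc = 14 \<or> pc = 15 \<or>
    pc = 16 \<or> pc = 17 \<or> pc = 18 \<or> pc = 19 \<or> pc = 20 \<or> pc = 21 \<or> pc = 22 \<or> pc = 23 \<or>
    pc = 24 \<or> pc = 25 \<or> pc = 26 \<or> pc = 27 \<or> pc = 28 \<or> pc = 29 \<or> pc = 30 \<or> pc = 31 \<or>
    pc = 32 \<or> pc = 33 \<or> pc = 34 \<or> pc = 35 \<or> pc = 36 \<or> pc = 37 \<or> pc = 38 \<or> pc = 39 \<or>
    pc = 40 \<or> pc = 41"
    by presburger
  then show ?thesis
    using inv False hN
    by (elim disjE) (simp_all add: run_inv_def line_inv_def main_inv_def line_weight_def step_def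
        halted_def sampler_def, auto)
qed

lemma run_inv_run: "h \<le> N \<Longrightarrow> run_inv N h t (run sampler \<omega> N h t)"
proof (induction t)
  case 0
  then show ?case
    by (simp add: run_def init_config_def run_inv_def line_inv_def line_weight_def mem_bounded_def
        halted_def)
next
  case (Suc t)
  obtain pc m k where run: "run sampler \<omega> N h t = (pc, m, k)"
    by (cases "run sampler \<omega> N h t")
  have "run sampler \<omega> N h (Suc t) = step sampler \<omega> (run sampler \<omega> N h t)"
    by (simp add: run_def)
  then show ?case
    using run_inv_step[OF Suc.prems, of t pc m k \<omega>] Suc.IH[OF Suc.prems] run by simp
qed

lemma word_bounded_sampler: "word_bounded sampler 3"
  unfolding word_bounded_def
proof (intro allI impI)
  fix N h :: nat and \<omega> t a
  assume "h \<le> N"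
  then have "fst (snd (run sampler \<omega> N h t)) a \<le> 2 * N + 8"
    using run_inv_run[of h N t \<omega>] by (simp add: run_inv_def)
  also have "\<dots> \<le> (N + 2) ^ 3"
    by (simp add: power3_eq_cube algebra_simps)
  finally show "fst (snd (run sampler \<omega> N h t)) a \<le> (N + 2) ^ 3" .
qed

lemma sampler_time:
  assumes "h \<le> N" "\<not> halted sampler (run sampler \<omega> N h t)"
  shows "t \<le> 12 * bits_used (run sampler \<omega> N h t) + 30 * N + 41"
proof -
  obtain pc m k where run: "run sampler \<omega> N h t = (pc, m, k)"
    by (cases "run sampler \<omega> N h t")
  then have "pc < 42"
    using assms(2) by (simp add: halted_def sampler_def)
  then have "line_weight pc \<le> 41"
    by (simp add: line_weight_def)
  moreover have "t \<le> 12 * k + 30 * (if 27 \<le> pc then N else N - m 0) + line_weight pc"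
    using run_inv_run[OF assms(1), of t \<omega>] run assms(2) unfolding run_inv_def by auto
  ultimately show ?thesis
    using run by (simp add: bits_used_def split: if_splits)
qed

lemma tail_le_exp_neg_sqrt: "(3 :: real) ^ N * (2 / 3) ^ (60 * N + 1) \<le> exp (- sqrt (real N))"
proof -
  have "(3 :: real) ^ N * (2 / 3) ^ (60 * N + 1) \<le> 3 ^ N * ((2 / 3) ^ 60) ^ N"
    by (simp add: power_mult[symmetric])
  also have "\<dots> = (3 * (2 / 3) ^ 60) ^ N"
    by (simp add: power_mult_distrib)
  also have "\<dots> \<le> exp (-1) ^ N"
  proof (rule power_mono)
    have "3 * (2 / 3 :: real) ^ 60 \<le> 1 / 3"
      by (simp add: power_divide)
    also have "\<dots> \<le> exp (-1)"
      using exp_le by (simp add: exp_minus field_simps)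
    finally show "3 * (2 / 3 :: real) ^ 60 \<le> exp (-1)" .
  qed simp
  also have "\<dots> = exp (- real N)"
    by (simp add: exp_of_nat_mult[symmetric])
  also have "\<dots> \<le> exp (- sqrt (real N))"
  proof (cases "N = 0")
    case False
    then have "1 \<le> sqrt (real N)"
      by simp
    then have "sqrt (real N) * 1 \<le> sqrt (real N) * sqrt (real N)"
      by (intro mult_left_mono) auto
    then show ?thesis
      by simp
  qed simp
  finally show ?thesis .
qed

theorem sampler_fast:
  assumes "h \<le> N"
  shows "measure coins {\<omega> \<in> space coins. \<exists>t. real t \<le> 792 * real (N + 1) \<and>
      halted sampler (run sampler \<omega> N h t) \<and> bits_used (run sampler \<omega> N h t) \<le> 60 * N}
    \<ge> 1 - exp (- sqrt (real N))"
proof -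
  let ?G = "{\<omega> \<in> space coins. \<exists>t. real t \<le> 792 * real (N + 1) \<and>
      halted sampler (run sampler \<omega> N h t) \<and> bits_used (run sampler \<omega> N h t) \<le> 60 * N}"
  let ?B = "{\<omega> \<in> space coins. \<exists>t. 60 * N + 1 \<le> bits_used (run sampler \<omega> N h t)}"
  have "space coins - ?B \<subseteq> ?G"
  proof
    fix \<omega>
    assume "\<omega> \<in> space coins - ?B"
    then have bits: "bits_used (run sampler \<omega> N h t) \<le> 60 * N" for t
      by (auto simp: not_less_eq_eq)
    let ?T = "750 * N + 42"
    have "halted sampler (run sampler \<omega> N h ?T)"
    proof (rule ccontr)
      assume "\<not> halted sampler (run sampler \<omega> N h ?T)"
      from sampler_time[OF assms this] bits[of ?T] show False
        by linarith
    qed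
    moreover have "real ?T \<le> 792 * real (N + 1)"
      by simp
    ultimately show "\<omega> \<in> ?G"
      unfolding space_coins using bits[of ?T] by blast
  qed
  moreover have "?G \<in> sets coins" "?B \<in> sets coins"
    by (rule sets_coins_ex_run)+
  ultimately have "1 - measure coins ?B \<le> measure coins ?G"
    by (simp add: coins.finite_measure_mono flip: coins.prob_compl)
  moreover have "measure coins ?B \<le> exp (- sqrt (real N))"
    using sampler_bits_tail[OF assms, of "60 * N + 1"] tail_le_exp_neg_sqrt[of N] by linarith
  ultimately show ?thesis
    by linarith
qed

theorem lemma7p1:
  shows "\<exists>(p :: prog) (d :: nat) (C :: real) (D :: real).
     word_bounded p d \<and>
     (\<forall>N h. h \<le> N \<longrightarrow>
        (\<forall>S. S \<subseteq> {..<N} \<and> card S = h \<longrightarrow>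
           measure coins {\<omega> \<in> space coins. \<exists>t. halted p (run p \<omega> N h t) \<and> ram_output (run p \<omega> N h t) = S}
             = 1 / real (N choose h)) \<and>
        measure coins {\<omega> \<in> space coins. \<exists>t. real t \<le> C * real (N + 1) \<and>
             halted p (run p \<omega> N h t) \<and> bits_used (run p \<omega> N h t) \<le> 60 * N}
          \<ge> 1 - D * exp (- sqrt (real N)))"
  using word_bounded_sampler sampler_uniform sampler_fast
  by (intro exI[of _ sampler] exI[of _ 3] exI[of _ 792] exI[of _ 1]) auto

end
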